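(* Let $v\ge 0$ and consider $$\min_{y\in\mathbb{R}^{n^-}}\ -\sum_{i=1}^{n^-}\left(\frac{y_i}{\lambda}\right)^{1/\beta}\quad\text{s.t.}\quad y_1\ge y_2\ge\cdots\ge y_{n^-}\ge 0,\qquad \sum_{i=1}^{n^-}h^-_iy_i=v.$$ There exists an index $L\in\{1,\dots,n^-\}$ such that $y^*$ with $y^*_i=Y$ for $1\le i\le L$ and $y^*_i=0$ for $L+1\le i\le n^-$, where $Y:=v/\sum_{i=1}^{L}h^-_i\ (\ge 0)$, is a global optimum of this problem.
   Context: Fix $N\in\mathbb{N}$, $\beta\in(0,1)$, $\lambda>0$, and an integer $1\le n^-\le N$. A function $f:[0,1]\to\mathbb{R}$ is inverse S-shaped if it is strictly increasing, continuously differentiable, and there is $x_0\in[0,1]$ such that $f'$ is strictly decreasing on $[0,x_0]$ and strictly increasing on $[x_0,1]$. Let $W^-:[0,1]\to[0,1]$ be inverse S-shaped with $W^-(0)=0$, $W^-(1)=1$, and $h^-_i:=W^-\!\left(\frac{i}{N}\right)-W^-\!\left(\frac{i-1}{N}\right)$ for $i=1,\dots,n^-$. *)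

theory Defs
  imports "HOL-Analysis.Analysis"
begin

definition inverse_S_shaped :: "(real \<Rightarrow> real) \<Rightarrow> bool" where
  "inverse_S_shaped f \<longleftrightarrow>
     strict_mono_on {0..1} f \<and>
     (\<exists>f'. (\<forall>x\<in>{0..1}. (f has_real_derivative f' x) (at x within {0..1})) \<and>
           continuous_on {0..1} f' \<and>
           (\<exists>x0\<in>{0..1}.
              (\<forall>x\<in>{0..x0}. \<forall>y\<in>{0..x0}. x < y \<longrightarrow> f' y < f' x) \<and>
              strict_mono_on {x0..1} f'))"

definition hminus :: "(real \<Rightarrow> real) \<Rightarrow> nat \<Rightarrow> nat \<Rightarrow> real" where
  "hminus W N i = W (real i / real N) - W (real (i - 1) / real N)"

definition obj :: "real \<Rightarrow> real \<Rightarrow> nat \<Rightarrow> (nat \<Rightarrow> real) \<Rightarrow> real" where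
  "obj \<beta> lam n y = - (\<Sum>i=1..n. (y i / lam) powr (1 / \<beta>))"

definition feasible :: "(real \<Rightarrow> real) \<Rightarrow> nat \<Rightarrow> nat \<Rightarrow> real \<Rightarrow> (nat \<Rightarrow> real) \<Rightarrow> bool" where
  "feasible W N n v y \<longleftrightarrow>
     (\<forall>i\<in>{1..<n}. y (Suc i) \<le> y i) \<and> y n \<ge> 0 \<and>
     (\<Sum>i=1..n. hminus W N i * y i) = v"

end

theory Submission
  imports Defs
begin

text \<open>The feasible set is the convex hull of the \<open>n\<^sup>-\<close> plateau vectors that are constant
on \<open>{1..L}\<close> and vanish afterwards: the drops \<open>c\<^sub>k = y\<^sub>k - y\<^sub>k\<^sub>+\<^sub>1 \<ge> 0\<close> of a feasible \<open>y\<close>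
give the weights \<open>c\<^sub>k (h\<^sub>1 + \<dots> + h\<^sub>k) / v\<close>. Since \<open>1/\<beta> \<ge> 1\<close>, the function
\<open>x \<mapsto> (x/\<lambda>)\<^bsup>1/\<beta>\<^esup>\<close> is convex, so by Jensen's inequality \<open>\<Sum>\<^sub>i (y\<^sub>i/\<lambda>)\<^bsup>1/\<beta>\<^esup>\<close> at any feasible \<open>y\<close>
is at most its value at the best plateau vector.\<close>

lemma convex_on_powr_nonneg:
  fixes p :: real
  assumes "1 \<le> p"
  shows "convex_on {0..} (\<lambda>x. x powr p)"
proof (rule convex_on_linorderI)
  fix t x y :: real
  assume t: "0 < t" "t < 1" and x: "x \<in> {0..}" and y: "y \<in> {0..}" and "x < y"
  show "((1 - t) *\<^sub>R x + t *\<^sub>R y) powr p \<le> (1 - t) * x powr p + t * y powr p"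
  proof (cases "x = 0")
    case True
    have "t powr p \<le> t powr 1"
      using t assms by (intro powr_mono') auto
    then have "t powr p * y powr p \<le> t * y powr p"
      using t by (intro mult_right_mono) auto
    then show ?thesis
      using True t y by (simp add: powr_mult)
  next
    case False
    with x \<open>x < y\<close> have "x \<in> {0<..}" "y \<in> {0<..}"
      by auto
    then show ?thesis
      using convex_onD[OF powr_convex[OF assms], of t x y] t by simp
  qed
qed (rule convex_real_interval)

lemma convex_on_scaled_powr:
  fixes c p :: real
  assumes "0 < c" "1 \<le> p"
  shows "convex_on {0..} (\<lambda>x. (x / c) powr p)"
proof (rule convex_onI)
  fix t x y :: real
  assume "0 < t" "t < 1" "x \<in> {0..}" "y \<in> {0..}"
  then show "(((1 - t) *\<^sub>R x + t *\<^sub>R y) / c) powr p \<le> (1 - t) * (x / c) powr p + t * (y / c) powr p"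
    using convex_onD[OF convex_on_powr_nonneg[OF \<open>1 \<le> p\<close>], of t "x / c" "y / c"] assms
    by (simp add: add_divide_distrib)
qed (rule convex_real_interval)

lemma hminus_pos:
  assumes "strict_mono_on {0..1} W" "1 \<le> i" "i \<le> N"
  shows "0 < hminus W N i"
proof -
  have "real (i - 1) / real N < real i / real N"
    using assms(2,3) by (intro divide_strict_right_mono) auto
  moreover have "real i / real N \<in> {0..1}" "real (i - 1) / real N \<in> {0..1}"
    using assms(2,3) by auto
  ultimately show ?thesis
    using assms(1) by (simp add: hminus_def strict_mono_onD)
qed

lemma nonincreasing_eq_sum_of_drops:
  fixes y :: "nat \<Rightarrow> real"
  assumes "\<forall>i\<in>{1..<n}. y (Suc i) \<le> y i" "0 \<le> y n"
  obtains c where "\<And>k. k \<in> {1..n} \<Longrightarrow> 0 \<le> c k"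
    and "\<And>i. i \<in> {1..n} \<Longrightarrow> y i = (\<Sum>k=i..n. c k)"
proof -
  define z where "z k = (if k \<le> n then y k else 0)" for k
  show thesis
  proof (rule that[of "\<lambda>k. z k - z (Suc k)"])
    fix k
    assume "k \<in> {1..n}"
    then show "0 \<le> z k - z (Suc k)"
      using assms by (cases "k < n") (auto simp: z_def)
  next
    fix i
    assume i: "i \<in> {1..n}"
    have "(\<Sum>k=i..n. z k - z (Suc k)) = z i - z (Suc n)"
      using i sum_Suc_diff[of i n "\<lambda>k. - z k"] by simp
    then show "y i = (\<Sum>k=i..n. z k - z (Suc k))"
      using i by (simp add: z_def)
  qed
qed

lemma sum_weighted_tails:
  fixes h c :: "nat \<Rightarrow> 'a::comm_semiring_1"
  shows "(\<Sum>i=1..n. h i * (\<Sum>k=i..n. c k)) = (\<Sum>k=1..n. c k * (\<Sum>i=1..k. h i))"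
proof (induction n)
  case (Suc n)
  have "(\<Sum>i=1..Suc n. h i * (\<Sum>k=i..Suc n. c k))
      = (\<Sum>i=1..n. h i * (\<Sum>k=i..n. c k)) + c (Suc n) * (\<Sum>i=1..Suc n. h i)"
    by (simp add: sum.distrib distrib_left sum_distrib_left mult.commute)
  with Suc show ?case
    by simp
qed simp

definition plateau :: "(nat \<Rightarrow> real) \<Rightarrow> real \<Rightarrow> nat \<Rightarrow> nat \<Rightarrow> real" where
  "plateau h v L i = (if i \<le> L then v / (\<Sum>j=1..L. h j) else 0)"

lemma plateau_weighted_sum:
  assumes "L \<le> n" "(\<Sum>j=1..L. h j) \<noteq> 0"
  shows "(\<Sum>i=1..n. h i * plateau h v L i) = v"
proof -
  have "(\<Sum>i=1..n. h i * plateau h v L i) = (\<Sum>i=1..L. h i * (v / (\<Sum>j=1..L. h j)))"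
    using assms(1) by (intro sum.mono_neutral_cong_right) (auto simp: plateau_def)
  also have "\<dots> = (\<Sum>j=1..L. h j) * (v / (\<Sum>j=1..L. h j))"
    by (simp only: sum_distrib_right)
  also have "\<dots> = v"
    using assms(2) by simp
  finally show ?thesis .
qed

lemma convex_combination_of_plateaus:
  fixes h y :: "nat \<Rightarrow> real"
  assumes h: "\<And>i. i \<in> {1..n} \<Longrightarrow> 0 < h i"
    and dec: "\<forall>i\<in>{1..<n}. y (Suc i) \<le> y i" and yn: "0 \<le> y n"
    and v: "(\<Sum>i=1..n. h i * y i) = v" "0 \<le> v" and n: "1 \<le> n"
  obtains t where "\<And>k. k \<in> {1..n} \<Longrightarrow> 0 \<le> t k" "(\<Sum>k=1..n. t k) = 1"
    and "\<And>i. i \<in> {1..n} \<Longrightarrow> y i = (\<Sum>k=1..n. t k * plateau h v k i)"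
proof -
  define H where "H k = (\<Sum>i=1..k. h i)" for k
  have H: "0 < H k" if "k \<in> {1..n}" for k
    using that h unfolding H_def by (intro sum_pos) auto
  obtain c where c: "\<And>k. k \<in> {1..n} \<Longrightarrow> 0 \<le> c k"
    and y: "\<And>i. i \<in> {1..n} \<Longrightarrow> y i = (\<Sum>k=i..n. c k)"
    using nonincreasing_eq_sum_of_drops[OF dec yn] by blast
  have "v = (\<Sum>i=1..n. h i * (\<Sum>k=i..n. c k))"
    using y by (simp flip: v(1))
  also have "\<dots> = (\<Sum>k=1..n. c k * H k)"
    unfolding H_def by (rule sum_weighted_tails)
  finally have v_eq: "v = (\<Sum>k=1..n. c k * H k)" .
  show thesis
  proof (cases "v = 0")
    case True
    then have "\<forall>k\<in>{1..n}. c k * H k = 0"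
      using v_eq c H by (subst sum_nonneg_eq_0_iff[symmetric]) (auto simp: less_imp_le)
    then have "c k = 0" if "k \<in> {1..n}" for k
      using that H by fastforce
    then have "y i = 0" if "i \<in> {1..n}" for i
      using that y by (simp add: sum.neutral)
    moreover have "plateau h v k i = 0" for k i
      using True by (simp add: plateau_def)
    ultimately show thesis
      using n by (intro that[of "\<lambda>k. if k = 1 then 1 else 0"]) auto
  next
    case False
    define t where "t k = c k * H k / v" for k
    show thesis
    proof (rule that[of t])
      show "0 \<le> t k" if "k \<in> {1..n}" for k
        using c[OF that] H[OF that] v(2) by (simp add: t_def)
      show "(\<Sum>k=1..n. t k) = 1"
        using v_eq False by (simp add: t_def flip: sum_divide_distrib)
    next
      fix i
      assume i: "i \<in> {1..n}"
      have "t k * plateau h v k i = (if k \<in> {i..} then c k else 0)" if "k \<in> {1..n}" for k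
        using H[OF that] False by (simp add: t_def plateau_def H_def)
      then have "(\<Sum>k=1..n. t k * plateau h v k i) = (\<Sum>k=1..n. if k \<in> {i..} then c k else 0)"
        by (intro sum.cong) auto
      also have "\<dots> = (\<Sum>k\<in>{1..n} \<inter> {i..}. c k)"
        by (rule sum.inter_restrict[symmetric]) simp
      also have "{1..n} \<inter> {i..} = {i..n}"
        using i by auto
      finally show "y i = (\<Sum>k=1..n. t k * plateau h v k i)"
        using y[OF i] by simp
    qed
  qed
qed

lemma convex_sum_le_best_plateau:
  fixes g :: "real \<Rightarrow> real" and h y :: "nat \<Rightarrow> real"
  assumes g: "convex_on {0..} g" and h: "\<And>i. i \<in> {1..n} \<Longrightarrow> 0 < h i"
    and dec: "\<forall>i\<in>{1..<n}. y (Suc i) \<le> y i" and yn: "0 \<le> y n"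
    and v: "(\<Sum>i=1..n. h i * y i) = v" "0 \<le> v" and n: "1 \<le> n"
    and L: "\<And>k. k \<in> {1..n} \<Longrightarrow>
              (\<Sum>i=1..n. g (plateau h v k i)) \<le> (\<Sum>i=1..n. g (plateau h v L i))"
  shows "(\<Sum>i=1..n. g (y i)) \<le> (\<Sum>i=1..n. g (plateau h v L i))"
proof -
  obtain t where t_nonneg: "\<And>k. k \<in> {1..n} \<Longrightarrow> 0 \<le> t k" and t_sum: "(\<Sum>k=1..n. t k) = 1"
    and y: "\<And>i. i \<in> {1..n} \<Longrightarrow> y i = (\<Sum>k=1..n. t k * plateau h v k i)"
    using convex_combination_of_plateaus[OF h dec yn v n] by blast
  have plateau_nonneg: "plateau h v k i \<in> {0..}" if "k \<in> {1..n}" for k i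
    using that h v(2) by (auto simp: plateau_def intro!: divide_nonneg_pos sum_pos)
  have "g (y i) \<le> (\<Sum>k=1..n. t k * g (plateau h v k i))" if "i \<in> {1..n}" for i
    using convex_on_sum[OF _ _ g, of "{1..n}" t "\<lambda>k. plateau h v k i"]
      n t_sum t_nonneg plateau_nonneg y[OF that] by simp
  then have "(\<Sum>i=1..n. g (y i)) \<le> (\<Sum>i=1..n. \<Sum>k=1..n. t k * g (plateau h v k i))"
    by (intro sum_mono) auto
  also have "\<dots> = (\<Sum>k=1..n. t k * (\<Sum>i=1..n. g (plateau h v k i)))"
    by (subst sum.swap) (simp add: sum_distrib_left)
  also have "\<dots> \<le> (\<Sum>k=1..n. t k * (\<Sum>i=1..n. g (plateau h v L i)))"
    by (rule sum_mono, rule mult_left_mono) (use t_nonneg L in auto)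
  also have "\<dots> = (\<Sum>i=1..n. g (plateau h v L i))"
    using t_sum by (simp flip: sum_distrib_right)
  finally show ?thesis .
qed

lemma feasible_plateau:
  assumes "L \<in> {1..n}" "0 < (\<Sum>i=1..L. hminus W N i)" "0 \<le> v"
  shows "feasible W N n v (plateau (hminus W N) v L)"
  using assms plateau_weighted_sum[of L n "hminus W N" v]
  by (auto simp: feasible_def plateau_def)

theorem theorem2:
  fixes N n :: nat and \<beta> lam v :: real and W :: "real \<Rightarrow> real"
  assumes "0 < \<beta>" "\<beta> < 1" "0 < lam"
    and "1 \<le> n" "n \<le> N"
    and "inverse_S_shaped W" "W 0 = 0" "W 1 = 1"
    and "\<forall>x\<in>{0..1}. W x \<in> {0..1}"
    and "0 \<le> v"
  shows "\<exists>L\<in>{1..n}.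
           (let Y = v / (\<Sum>i=1..L. hminus W N i);
                ystar = (\<lambda>i. if i \<le> L then Y else 0)
            in feasible W N n v ystar \<and>
               (\<forall>y. feasible W N n v y \<longrightarrow> obj \<beta> lam n ystar \<le> obj \<beta> lam n y))"
proof -
  define g where "g x = (x / lam) powr (1 / \<beta>)" for x
  have g: "convex_on {0..} g"
    unfolding g_def using assms(1-3) by (intro convex_on_scaled_powr) auto
  have obj_eq: "obj \<beta> lam n y = - (\<Sum>i=1..n. g (y i))" for y
    by (simp add: obj_def g_def)
  have h: "0 < hminus W N i" if "i \<in> {1..n}" for i
    using that assms(5,6) by (intro hminus_pos) (auto simp: inverse_S_shaped_def)
  define G where "G k = (\<Sum>i=1..n. g (plateau (hminus W N) v k i))" for k
  obtain L where L: "L \<in> {1..n}" "Max (G ` {1..n}) = G L"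
    using obtains_MAX[of "{1..n}" G] assms(4) by auto
  have G_max: "G k \<le> G L" if "k \<in> {1..n}" for k
    using L(2) that by (metis Max_ge finite_atLeastAtMost finite_imageI imageI)
  have ystar: "(\<lambda>i. if i \<le> L then v / (\<Sum>i=1..L. hminus W N i) else 0) = plateau (hminus W N) v L"
    by (simp add: fun_eq_iff plateau_def)
  have "feasible W N n v (plateau (hminus W N) v L)"
    using L(1) h assms(10) by (intro feasible_plateau sum_pos) auto
  moreover have "obj \<beta> lam n (plateau (hminus W N) v L) \<le> obj \<beta> lam n y"
    if "feasible W N n v y" for y
    using convex_sum_le_best_plateau[OF g h _ _ _ assms(10,4) G_max[unfolded G_def]] that
    by (auto simp: obj_eq feasible_def)
  ultimately show ?thesis
    unfolding Let_def using L(1) by (intro bexI[of _ L], unfold ystar) blast+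
qed

end
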